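(* Let $\Gamma_1,\Gamma_2\subseteq\{0,1\}^\infty$. If a learning function $l_1$ uniformly weakly detects that every $X\in\Gamma_1$ is patterned and a learning function $l_2$ uniformly weakly detects that every $X\in\Gamma_2$ is patterned, then there exists a learning function $l_3$ that uniformly weakly detects that every $X\in\Gamma_1\cup\Gamma_2$ is patterned. Moreover, if $l_1$ and $l_2$ are computable, then $l_3$ can be chosen computable.
   Context: A learning function is a function $l:\{0,1\}^*\to\{\mathrm{yes},\mathrm{no}\}$. $Y\upharpoonright m$ is the length-$m$ prefix of $Y$; $\lambda$ is the uniform (Lebesgue) measure on $\{0,1\}^\infty$. A learning function $l$ uniformly weakly detects that $X$ is patterned iff (i) $l(X\upharpoonright m)=\mathrm{yes}$ for infinitely many $m$, and (ii) for all $n\in\mathbb N$, $\lambda(\{Y : \#\{m: l(Y\upharpoonright m)=\mathrm{yes}\}\ge n\})\le 2^{-n}$. *)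

theory Defs
  imports "HOL-Probability.Probability"
begin

text \<open>Infinite binary sequences are modelled as nat \<Rightarrow> bool, finite binary strings as
  bool list. A learning function is a map bool list \<Rightarrow> bool (True = yes, False = no).\<close>

type_synonym learning_function = "bool list \<Rightarrow> bool"

definition prefix_of :: "(nat \<Rightarrow> bool) \<Rightarrow> nat \<Rightarrow> bool list" where
  "prefix_of Y m = map Y [0..<m]"

definition cantor_measure :: "(nat \<Rightarrow> bool) measure" where
  "cantor_measure = PiM UNIV (\<lambda>_. measure_pmf (bernoulli_pmf (1/2)))"

definition yes_at_least :: "learning_function \<Rightarrow> nat \<Rightarrow> (nat \<Rightarrow> bool) \<Rightarrow> bool" where
  "yes_at_least l n Y \<longleftrightarrow>
     infinite {m. l (prefix_of Y m)} \<or> n \<le> card {m. l (prefix_of Y m)}"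

definition uniformly_weakly_detects :: "learning_function \<Rightarrow> (nat \<Rightarrow> bool) set \<Rightarrow> bool" where
  "uniformly_weakly_detects l \<Gamma> \<longleftrightarrow>
     (\<forall>X\<in>\<Gamma>. infinite {m. l (prefix_of X m)}) \<and>
     (\<forall>n::nat. emeasure cantor_measure {Y. yes_at_least l n Y} \<le> ennreal ((1/2) ^ n))"

datatype recf = Zero | Succ | Proj nat | Comp recf "recf list" | Prim recf recf | Mini recf

inductive eval_rf :: "recf \<Rightarrow> nat list \<Rightarrow> nat \<Rightarrow> bool" where
  zero: "eval_rf Zero xs 0"
| succ: "eval_rf Succ (x # xs) (Suc x)"
| proj: "i < length xs \<Longrightarrow> eval_rf (Proj i) xs (xs ! i)"
| comp: "list_all2 (\<lambda>g y. eval_rf g xs y) gs ys \<Longrightarrow> eval_rf f ys z \<Longrightarrow> eval_rf (Comp f gs) xs z"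
| prim0: "eval_rf f xs z \<Longrightarrow> eval_rf (Prim f g) (0 # xs) z"
| primS: "eval_rf (Prim f g) (y # xs) v \<Longrightarrow> eval_rf g (y # v # xs) z
           \<Longrightarrow> eval_rf (Prim f g) (Suc y # xs) z"
| mini: "eval_rf f (y # xs) 0 \<Longrightarrow> (\<forall>z<y. \<exists>v>0. eval_rf f (z # xs) v)
           \<Longrightarrow> eval_rf (Mini f) xs y"
monos list.rel_mono

text \<open>Bijective binary encoding of bool lists into nat.\<close>
fun encode_bits :: "bool list \<Rightarrow> nat" where
  "encode_bits [] = 0"
| "encode_bits (b # bs) = 2 * encode_bits bs + (if b then 2 else 1)"

definition computable_lf :: "learning_function \<Rightarrow> bool" where
  "computable_lf l \<longleftrightarrow>
     (\<exists>r. \<forall>\<sigma>. eval_rf r [encode_bits \<sigma>] (if l \<sigma> then 1 else 0))"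

end

theory Submission
  imports Defs
begin

text \<open>The combined learner watches the larger of the two yes-counts along the input and says
  yes exactly when this maximum reaches a new value of at least 2. If either learner says yes
  infinitely often, the maximum is unbounded and so is the number of new values. Conversely,
  n \<ge> 1 yeses of the combined learner force the maximum up to n + 1, so one of the two learners
  said yes n + 1 times; the union bound gives measure at most 2 \<cdot> 2^-(n+1) = 2^-n. The combined
  learner only compares two counts of yeses on prefixes of its input, so it is primitive
  recursive relative to the two learners.\<close>

definition count_below :: "(nat \<Rightarrow> bool) \<Rightarrow> nat \<Rightarrow> nat" where
  "count_below P K = card {k. k < K \<and> P k}"

lemma count_below_0 [simp]: "count_below P 0 = 0"
  by (simp add: count_below_def)

lemma count_below_Suc: "count_below P (Suc K) = count_below P K + of_bool (P K)"
proof -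
  have "{k. k < Suc K \<and> P k} = (if P K then insert K else id) {k. k < K \<and> P k}"
    by (auto simp: less_Suc_eq)
  then show ?thesis
    unfolding count_below_def by simp
qed

lemma mono_count_below: "mono (count_below P)"
  unfolding count_below_def by (intro monoI card_mono) auto

lemma count_below_cong:
  "(\<And>k. k < K \<Longrightarrow> P k = Q k) \<Longrightarrow> count_below P K = count_below Q K"
  unfolding count_below_def by (intro arg_cong[where f = card]) auto

lemma at_least_iff_count_below:
  "(infinite {k. P k} \<or> n \<le> card {k. P k}) \<longleftrightarrow> (\<exists>K. n \<le> count_below P K)"
proof (cases "finite {k. P k}")
  case True
  then obtain K where K: "{k. P k} \<subseteq> {..<K}"
    using finite_nat_bounded by blast
  have "count_below P K' \<le> card {k. P k}" for K'
    unfolding count_below_def using True by (intro card_mono) auto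
  moreover have "count_below P K = card {k. P k}"
    unfolding count_below_def using K by (intro arg_cong[where f = card]) auto
  ultimately show ?thesis
    using True order_trans by metis
next
  case False
  have "\<exists>K. n \<le> count_below P K" for n
  proof (induction n)
    case (Suc n)
    then obtain K where "n \<le> count_below P K" by blast
    moreover obtain k where "K \<le> k" "P k"
      using False by (metis infinite_nat_iff_unbounded_le mem_Collect_eq)
    moreover have "count_below P K \<le> count_below P k"
      using mono_count_below \<open>K \<le> k\<close> by (rule monoD)
    ultimately have "Suc n \<le> count_below P (Suc k)"
      by (simp add: count_below_Suc)
    then show ?case by blast
  qed simp
  then show ?thesis
    using False by blast
qed

lemma infinite_iff_count_below_unbounded:
  "infinite {k. P k} \<longleftrightarrow> (\<forall>B. \<exists>K. B < count_below P K)"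
proof
  assume "infinite {k. P k}"
  then show "\<forall>B. \<exists>K. B < count_below P K"
    using at_least_iff_count_below[of P] by (meson Suc_le_eq)
next
  assume "\<forall>B. \<exists>K. B < count_below P K"
  then obtain K where "card {k. P k} < count_below P K"
    by blast
  then show "infinite {k. P k}"
    using at_least_iff_count_below[of P "Suc (card {k. P k})"] by (auto simp: Suc_le_eq)
qed

definition jump_at :: "(nat \<Rightarrow> nat) \<Rightarrow> nat \<Rightarrow> bool" where
  "jump_at G m \<longleftrightarrow> G m < G (Suc m) \<and> 2 \<le> G (Suc m)"

lemma count_jumps_less:
  assumes "mono G"
  shows "count_below (jump_at G) m < max 1 (G m)"
proof (induction m)
  case (Suc m)
  have "G m \<le> G (Suc m)"
    using assms by (simp add: monoD)
  with Suc show ?case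
    by (auto simp: count_below_Suc jump_at_def)
qed simp

lemma infinite_jumps:
  assumes "mono G" and unbounded: "\<And>B. \<exists>K. B < G K"
  shows "infinite {m. jump_at G m}"
proof
  assume "finite {m. jump_at G m}"
  then obtain N where N: "\<And>m. N \<le> m \<Longrightarrow> \<not> jump_at G m"
    by (metis finite_nat_set_iff_bounded mem_Collect_eq not_less)
  have bounded: "G m \<le> max 1 (G N)" if "N \<le> m" for m
    using that
  proof (induction m rule: dec_induct)
    case (step m)
    then show ?case
      using N[of m] monoD[OF assms(1), of "Suc m" m] by (auto simp: jump_at_def)
  qed simp
  obtain K where "max 1 (G N) < G K"
    using unbounded by blast
  moreover have "G K \<le> G (max K N)"
    using assms(1) by (simp add: monoD)
  ultimately show False
    using bounded[of "max K N"] by (simp add: max_def split: if_splits)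
qed

section \<open>Cantor space\<close>

lemma prob_space_cantor_measure: "prob_space cantor_measure"
  unfolding cantor_measure_def by (rule prob_space_PiM) (simp add: prob_space_measure_pmf)

lemma measurable_cantor_component:
  "(\<lambda>Y. Y i) \<in> measurable cantor_measure (count_space UNIV)"
proof -
  have "(\<lambda>Y. Y i) \<in> measurable cantor_measure (measure_pmf (bernoulli_pmf (1/2)))"
    unfolding cantor_measure_def by (rule measurable_component_singleton) simp
  then show ?thesis
    by (simp add: measurable_def)
qed

lemma measurable_prefix_of:
  "(\<lambda>Y. prefix_of Y m) \<in> measurable cantor_measure (count_space UNIV)"
proof (induction m)
  case 0
  then show ?case by (simp add: prefix_of_def)
next
  case (Suc m)
  have "(\<lambda>Y. prefix_of Y (Suc m)) = (\<lambda>Y. (\<lambda>s Y. s @ [Y m]) (prefix_of Y m) Y)"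
    by (simp add: prefix_of_def)
  also have "\<dots> \<in> measurable cantor_measure (count_space UNIV)"
    by (rule measurable_compose_countable[OF _ Suc])
       (rule measurable_compose[OF measurable_cantor_component[of m]]; simp)
  finally show ?case .
qed

lemma sets_cantor_measure_prefix_of: "{Y. P (prefix_of Y m)} \<in> sets cantor_measure"
proof -
  have "{Y. P (prefix_of Y m)} = (\<lambda>Y. prefix_of Y m) -` {s. P s} \<inter> space cantor_measure"
    by (simp add: cantor_measure_def space_PiM)
  also have "\<dots> \<in> sets cantor_measure"
    using measurable_prefix_of by (rule measurable_sets) simp
  finally show ?thesis .
qed

lemma length_prefix_of [simp]: "length (prefix_of Y m) = m"
  by (simp add: prefix_of_def)

lemma take_prefix_of: "k \<le> m \<Longrightarrow> take k (prefix_of Y m) = prefix_of Y k"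
  by (simp add: prefix_of_def take_map min_def)

abbreviation yes_count :: "learning_function \<Rightarrow> (nat \<Rightarrow> bool) \<Rightarrow> nat \<Rightarrow> nat" where
  "yes_count l Y \<equiv> count_below (\<lambda>k. l (prefix_of Y k))"

lemma yes_count_take_prefix_of:
  "K \<le> Suc m \<Longrightarrow> count_below (\<lambda>k. l (take k (prefix_of Y m))) K = yes_count l Y K"
  by (rule count_below_cong) (simp add: take_prefix_of)

lemma yes_at_least_iff_yes_count: "yes_at_least l n Y \<longleftrightarrow> (\<exists>K. n \<le> yes_count l Y K)"
  unfolding yes_at_least_def by (rule at_least_iff_count_below)

lemma sets_yes_at_least: "{Y. yes_at_least l n Y} \<in> sets cantor_measure"
proof -
  have "{Y. yes_at_least l n Y} =
      (\<Union>K. {Y. n \<le> count_below (\<lambda>k. l (take k (prefix_of Y K))) K})"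
    by (auto simp: yes_at_least_iff_yes_count yes_count_take_prefix_of)
  also have "\<dots> \<in> sets cantor_measure"
    using sets_cantor_measure_prefix_of by (intro sets.countable_UN) auto
  finally show ?thesis .
qed

section \<open>The combined learner\<close>

definition combined_learner :: "learning_function \<Rightarrow> learning_function \<Rightarrow> learning_function" where
  "combined_learner l1 l2 s \<longleftrightarrow>
     jump_at (\<lambda>K. max (count_below (\<lambda>k. l1 (take k s)) K) (count_below (\<lambda>k. l2 (take k s)) K))
       (length s)"

lemma combined_learner_prefix_of:
  "combined_learner l1 l2 (prefix_of Y m) \<longleftrightarrow>
     jump_at (\<lambda>K. max (yes_count l1 Y K) (yes_count l2 Y K)) m"
  by (simp add: combined_learner_def jump_at_def yes_count_take_prefix_of)

lemma mono_max_yes_count: "mono (\<lambda>K. max (yes_count l1 Y K) (yes_count l2 Y K))"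
  using mono_count_below by (intro monoI max.mono) (auto dest: monoD)

lemma infinite_combined_learner_yes:
  assumes "infinite {m. l1 (prefix_of Y m)} \<or> infinite {m. l2 (prefix_of Y m)}"
  shows "infinite {m. combined_learner l1 l2 (prefix_of Y m)}"
proof -
  have "\<exists>K. B < max (yes_count l1 Y K) (yes_count l2 Y K)" for B
    using assms unfolding infinite_iff_count_below_unbounded by (meson less_max_iff_disj)
  then show ?thesis
    unfolding combined_learner_prefix_of by (rule infinite_jumps[OF mono_max_yes_count])
qed

lemma yes_at_least_combined_learner:
  assumes "1 \<le> n" and "yes_at_least (combined_learner l1 l2) n Y"
  shows "yes_at_least l1 (Suc n) Y \<or> yes_at_least l2 (Suc n) Y"
proof -
  let ?G = "\<lambda>K. max (yes_count l1 Y K) (yes_count l2 Y K)"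
  obtain K where "n \<le> count_below (jump_at ?G) K"
    using assms(2) by (auto simp: yes_at_least_iff_yes_count combined_learner_prefix_of)
  also have "\<dots> < max 1 (?G K)"
    by (rule count_jumps_less[OF mono_max_yes_count])
  finally have "Suc n \<le> ?G K"
    using assms(1) by simp
  then show ?thesis
    unfolding yes_at_least_iff_yes_count by (metis max_def)
qed

lemma emeasure_yes_at_least_combined_learner:
  assumes "\<And>n. emeasure cantor_measure {Y. yes_at_least l1 n Y} \<le> ennreal ((1/2) ^ n)"
    and "\<And>n. emeasure cantor_measure {Y. yes_at_least l2 n Y} \<le> ennreal ((1/2) ^ n)"
  shows "emeasure cantor_measure {Y. yes_at_least (combined_learner l1 l2) n Y} \<le> ennreal ((1/2) ^ n)"
proof (cases "n = 0")
  case True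
  then show ?thesis
    using prob_space.emeasure_le_1[OF prob_space_cantor_measure] by simp
next
  case False
  let ?A = "\<lambda>l. {Y. yes_at_least l (Suc n) Y}"
  have "emeasure cantor_measure {Y. yes_at_least (combined_learner l1 l2) n Y}
      \<le> emeasure cantor_measure (?A l1 \<union> ?A l2)"
    using yes_at_least_combined_learner[of n] False
    by (intro emeasure_mono) (auto intro: sets_yes_at_least)
  also have "\<dots> \<le> emeasure cantor_measure (?A l1) + emeasure cantor_measure (?A l2)"
    by (intro emeasure_subadditive sets_yes_at_least)
  also have "\<dots> \<le> ennreal ((1/2) ^ Suc n) + ennreal ((1/2) ^ Suc n)"
    using assms by (rule add_mono)
  also have "\<dots> = ennreal ((1/2) ^ n)"
    by (simp add: ennreal_plus[symmetric] del: ennreal_plus)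
  finally show ?thesis .
qed

lemma uniformly_weakly_detects_combined_learner:
  assumes "uniformly_weakly_detects l1 \<Gamma>1" and "uniformly_weakly_detects l2 \<Gamma>2"
  shows "uniformly_weakly_detects (combined_learner l1 l2) (\<Gamma>1 \<union> \<Gamma>2)"
  using assms infinite_combined_learner_yes emeasure_yes_at_least_combined_learner
  unfolding uniformly_weakly_detects_def by (metis Un_iff)

section \<open>Recursive functions\<close>

definition rf_computable :: "nat \<Rightarrow> (nat list \<Rightarrow> nat) \<Rightarrow> bool" where
  "rf_computable n f \<longleftrightarrow> (\<exists>r. \<forall>xs. length xs = n \<longrightarrow> eval_rf r xs (f xs))"

lemma rf_computable_cong:
  "rf_computable n f \<Longrightarrow> (\<And>xs. length xs = n \<Longrightarrow> f xs = g xs) \<Longrightarrow> rf_computable n g"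
  unfolding rf_computable_def by metis

lemma rf_computable_zero: "rf_computable n (\<lambda>_. 0)"
  unfolding rf_computable_def by (metis eval_rf.zero)

lemma rf_computable_proj: "i < n \<Longrightarrow> rf_computable n (\<lambda>xs. xs ! i)"
  unfolding rf_computable_def by (metis eval_rf.proj)

lemma length_eq_1_nth: "length ys = 1 \<Longrightarrow> ys = [ys ! 0]"
  by (metis One_nat_def length_0_conv length_Suc_conv nth_Cons_0)

lemma length_eq_2_nth: "length ys = 2 \<Longrightarrow> ys = [ys ! 0, ys ! 1]"
  by (cases ys; cases "tl ys"; auto simp: numeral_2_eq_2)

lemma rf_computable_list:
  assumes "\<forall>g\<in>set gs. rf_computable n g"
  shows "\<exists>rs. \<forall>xs. length xs = n \<longrightarrow> list_all2 (\<lambda>r y. eval_rf r xs y) rs (map (\<lambda>g. g xs) gs)"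
  using assms
proof (induction gs)
  case (Cons g gs)
  then obtain rs where
    "\<forall>xs. length xs = n \<longrightarrow> list_all2 (\<lambda>r y. eval_rf r xs y) rs (map (\<lambda>g. g xs) gs)"
    by auto
  moreover obtain r where "\<forall>xs. length xs = n \<longrightarrow> eval_rf r xs (g xs)"
    using Cons.prems unfolding rf_computable_def by auto
  ultimately show ?case
    by (intro exI[of _ "r # rs"]) auto
qed auto

lemma rf_computable_comp:
  assumes "rf_computable (length gs) h" and "\<forall>g\<in>set gs. rf_computable n g"
  shows "rf_computable n (\<lambda>xs. h (map (\<lambda>g. g xs) gs))"
proof -
  obtain rs where
    rs: "\<forall>xs. length xs = n \<longrightarrow> list_all2 (\<lambda>r y. eval_rf r xs y) rs (map (\<lambda>g. g xs) gs)"
    using rf_computable_list[OF assms(2)] by blast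
  obtain rh where rh: "\<forall>xs. length xs = length gs \<longrightarrow> eval_rf rh xs (h xs)"
    using assms(1) unfolding rf_computable_def by auto
  show ?thesis
    unfolding rf_computable_def
    by (rule exI[of _ "Comp rh rs"]) (auto intro!: eval_rf.comp rs[rule_format] rh[rule_format])
qed

lemma rf_computable_compose1:
  "rf_computable 1 (\<lambda>ys. h (ys ! 0)) \<Longrightarrow> rf_computable n g \<Longrightarrow> rf_computable n (\<lambda>xs. h (g xs))"
  using rf_computable_comp[of "[g]" "\<lambda>ys. h (ys ! 0)" n] by simp

lemma rf_computable_compose2:
  "rf_computable 2 (\<lambda>ys. h (ys ! 0) (ys ! 1)) \<Longrightarrow> rf_computable n g1 \<Longrightarrow> rf_computable n g2 \<Longrightarrow>
    rf_computable n (\<lambda>xs. h (g1 xs) (g2 xs))"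
  using rf_computable_comp[of "[g1, g2]" "\<lambda>ys. h (ys ! 0) (ys ! 1)" n] by (simp add: numeral_2_eq_2)

lemma rf_computable_Suc: "rf_computable n g \<Longrightarrow> rf_computable n (\<lambda>xs. Suc (g xs))"
proof (rule rf_computable_compose1[where h = Suc])
  show "rf_computable 1 (\<lambda>ys. Suc (ys ! 0))"
    unfolding rf_computable_def by (metis eval_rf.succ length_eq_1_nth)
qed

lemma rf_computable_const: "rf_computable n (\<lambda>_. c)"
  by (induction c) (auto intro: rf_computable_zero rf_computable_Suc)

lemma rf_computable_prim:
  assumes "rf_computable n f" and "rf_computable (Suc (Suc n)) g"
    and "\<And>xs. length xs = n \<Longrightarrow> F 0 xs = f xs"
    and "\<And>k xs. length xs = n \<Longrightarrow> F (Suc k) xs = g (k # F k xs # xs)"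
  shows "rf_computable (Suc n) (\<lambda>ys. F (hd ys) (tl ys))"
proof -
  obtain rf where rf: "\<forall>xs. length xs = n \<longrightarrow> eval_rf rf xs (f xs)"
    using assms(1) unfolding rf_computable_def by auto
  obtain rg where rg: "\<forall>xs. length xs = Suc (Suc n) \<longrightarrow> eval_rf rg xs (g xs)"
    using assms(2) unfolding rf_computable_def by auto
  have eval: "eval_rf (Prim rf rg) (y # xs) (F y xs)" if "length xs = n" for y xs
    using that
  proof (induction y)
    case 0
    then show ?case using rf assms(3) by (auto intro: eval_rf.prim0)
  next
    case (Suc y)
    then show ?case using rg assms(4) by (auto intro: eval_rf.primS)
  qed
  show ?thesis
    unfolding rf_computable_def
  proof (intro exI[of _ "Prim rf rg"] allI impI)
    fix ys :: "nat list"
    assume "length ys = Suc n"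
    then obtain y xs where "ys = y # xs" "length xs = n"
      by (metis length_Suc_conv)
    then show "eval_rf (Prim rf rg) ys (F (hd ys) (tl ys))"
      using eval by simp
  qed
qed

lemma rf_computable_rec1:
  assumes "rf_computable 2 (\<lambda>ys. S (ys ! 0) (ys ! 1))" and "F 0 = c" and "\<And>k. F (Suc k) = S k (F k)"
  shows "rf_computable 1 (\<lambda>ys. F (ys ! 0))"
proof -
  have "rf_computable (Suc 0) (\<lambda>ys. (\<lambda>k (xs :: nat list). F k) (hd ys) (tl ys))"
    by (rule rf_computable_prim[of 0 "\<lambda>_. c" "\<lambda>ys. S (ys ! 0) (ys ! 1)"])
       (use assms in \<open>auto intro: rf_computable_const simp: numeral_2_eq_2\<close>)
  then have "rf_computable 1 (\<lambda>ys. F (hd ys))"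
    by simp
  then show ?thesis
    by (rule rf_computable_cong) (metis One_nat_def length_eq_1_nth list.sel(1))
qed

lemma rf_computable_rec2:
  assumes "rf_computable 1 (\<lambda>ys. B (ys ! 0))" and "rf_computable 3 (\<lambda>ys. S (ys ! 0) (ys ! 1) (ys ! 2))"
    and "\<And>x. F 0 x = B x" and "\<And>k x. F (Suc k) x = S k (F k x) x"
  shows "rf_computable 2 (\<lambda>ys. F (ys ! 0) (ys ! 1))"
proof -
  have "rf_computable (Suc 1) (\<lambda>ys. (\<lambda>k (xs :: nat list). F k (xs ! 0)) (hd ys) (tl ys))"
    by (rule rf_computable_prim[of 1 "\<lambda>ys. B (ys ! 0)" "\<lambda>ys. S (ys ! 0) (ys ! 1) (ys ! 2)"])
       (use assms in \<open>auto simp: numeral_3_eq_3\<close>)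
  then have "rf_computable 2 (\<lambda>ys. F (hd ys) (tl ys ! 0))"
    by (simp add: numeral_2_eq_2)
  then show ?thesis
    by (rule rf_computable_cong)
       (metis length_eq_2_nth list.sel(1,3) nth_Cons_0 numeral_2_eq_2)
qed

lemma rf_computable_add:
  assumes "rf_computable n g" and "rf_computable n h"
  shows "rf_computable n (\<lambda>xs. g xs + h xs)"
proof -
  have "rf_computable 2 (\<lambda>ys. ys ! 0 + ys ! 1)"
    by (rule rf_computable_rec2[where B = "\<lambda>x. x" and S = "\<lambda>k v x. Suc v"])
       (intro rf_computable_proj rf_computable_Suc | simp)+
  then show ?thesis
    using assms by (rule rf_computable_compose2[where h = "(+)"])
qed

lemma rf_computable_diff:
  assumes "rf_computable n g" and "rf_computable n h"
  shows "rf_computable n (\<lambda>xs. g xs - h xs)"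
proof -
  have "rf_computable 1 (\<lambda>ys. ys ! 0 - 1)"
    by (rule rf_computable_rec1[where S = "\<lambda>k v. k" and c = 0]) (auto intro: rf_computable_proj)
  then have "rf_computable 3 (\<lambda>ys. ys ! 1 - 1)"
    by (rule rf_computable_compose1[where h = "\<lambda>x. x - 1"]) (simp add: rf_computable_proj)
  then have "rf_computable 2 (\<lambda>ys. ys ! 1 - ys ! 0)"
    by (intro rf_computable_rec2[where F = "\<lambda>y x. x - y" and B = "\<lambda>x. x" and S = "\<lambda>k v x. v - 1"])
       (auto intro: rf_computable_proj)
  then show ?thesis
    using assms(2,1) by (rule rf_computable_compose2[where h = "\<lambda>y x. x - y"])
qed

lemma rf_computable_mult:
  assumes "rf_computable n g" and "rf_computable n h"
  shows "rf_computable n (\<lambda>xs. g xs * h xs)"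
proof -
  have "rf_computable 2 (\<lambda>ys. ys ! 0 * ys ! 1)"
    by (rule rf_computable_rec2[where B = "\<lambda>x. 0" and S = "\<lambda>k v x. v + x"])
       (intro rf_computable_add rf_computable_proj rf_computable_const | simp)+
  then show ?thesis
    using assms by (rule rf_computable_compose2[where h = "(*)"])
qed

lemma rf_computable_power2:
  assumes "rf_computable n g"
  shows "rf_computable n (\<lambda>xs. 2 ^ g xs)"
proof -
  have "rf_computable 1 (\<lambda>ys. 2 ^ (ys ! 0))"
    by (rule rf_computable_rec1[where S = "\<lambda>k v. v + v" and c = 1])
       (intro rf_computable_add rf_computable_proj | simp)+
  then show ?thesis
    using assms by (rule rf_computable_compose1[where h = "\<lambda>x. 2 ^ x"])
qed

lemma rf_computable_div2:
  assumes "rf_computable n g"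
  shows "rf_computable n (\<lambda>xs. g xs div 2)"
proof -
  have "rf_computable 1 (\<lambda>ys. ys ! 0 mod 2)"
    by (rule rf_computable_rec1[where S = "\<lambda>k v. 1 - v" and c = 0])
       (intro rf_computable_diff rf_computable_proj rf_computable_const | simp add: mod_Suc)+
  then have "rf_computable 2 (\<lambda>ys. ys ! 0 mod 2)"
    by (rule rf_computable_compose1[where h = "\<lambda>x. x mod 2"]) (simp add: rf_computable_proj)
  then have "rf_computable 1 (\<lambda>ys. ys ! 0 div 2)"
    by (intro rf_computable_rec1[where S = "\<lambda>k v. v + k mod 2" and c = 0] rf_computable_add
        rf_computable_proj) (simp_all, presburger)
  then show ?thesis
    using assms by (rule rf_computable_compose1[where h = "\<lambda>x. x div 2"])
qed

lemma rf_computable_positive: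
  assumes "rf_computable n g"
  shows "rf_computable n (\<lambda>xs. of_bool (0 < g xs))"
proof -
  have "rf_computable 1 (\<lambda>ys. of_bool (0 < ys ! 0))"
    by (rule rf_computable_rec1[where S = "\<lambda>k v. 1" and c = 0]) (auto intro: rf_computable_const)
  then show ?thesis
    using assms by (rule rf_computable_compose1[where h = "\<lambda>x. of_bool (0 < x)"])
qed

lemma rf_computable_less:
  "rf_computable n g \<Longrightarrow> rf_computable n h \<Longrightarrow> rf_computable n (\<lambda>xs. of_bool (g xs < h xs))"
  using rf_computable_positive[OF rf_computable_diff, of n h g] by simp

lemma rf_computable_le:
  "rf_computable n g \<Longrightarrow> rf_computable n h \<Longrightarrow> rf_computable n (\<lambda>xs. of_bool (g xs \<le> h xs))"
  using rf_computable_less[OF _ rf_computable_Suc, of n g h] by (simp add: less_Suc_eq_le)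

lemma rf_computable_conj:
  "rf_computable n (\<lambda>xs. of_bool (P xs)) \<Longrightarrow> rf_computable n (\<lambda>xs. of_bool (Q xs)) \<Longrightarrow>
    rf_computable n (\<lambda>xs. of_bool (P xs \<and> Q xs))"
  unfolding of_bool_conj by (rule rf_computable_mult)

lemma rf_computable_max:
  "rf_computable n g \<Longrightarrow> rf_computable n h \<Longrightarrow> rf_computable n (\<lambda>xs. max (g xs) (h xs))"
  by (rule rf_computable_cong[OF rf_computable_add[OF _ rf_computable_diff], of n g h g]) auto

lemma rf_computable_count_below:
  assumes "rf_computable 2 (\<lambda>ys. of_bool (P (ys ! 0) (ys ! 1)))"
    and "rf_computable n g" and "rf_computable n h"
  shows "rf_computable n (\<lambda>xs. count_below (\<lambda>k. P k (h xs)) (g xs))"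
proof -
  have "rf_computable 3 (\<lambda>ys. of_bool (P (ys ! 0) (ys ! 2)))"
    using assms(1) by (rule rf_computable_compose2[where h = "\<lambda>k x. of_bool (P k x)"])
      (simp_all add: rf_computable_proj)
  then have "rf_computable 3 (\<lambda>ys. ys ! 1 + of_bool (P (ys ! 0) (ys ! 2)))"
    by (intro rf_computable_add rf_computable_proj) simp
  then have "rf_computable 2 (\<lambda>ys. count_below (\<lambda>k. P k (ys ! 1)) (ys ! 0))"
    by (intro rf_computable_rec2[where B = "\<lambda>x. 0"]) (simp_all add: rf_computable_const count_below_Suc)
  then show ?thesis
    using assms(2,3) by (rule rf_computable_compose2[where h = "\<lambda>K x. count_below (\<lambda>k. P k x) K"])
qed

section \<open>Computability of the combined learner\<close>

lemma length_le_encode_bits: "length s \<le> encode_bits s"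
  by (induction s) auto

lemma encode_bits_eq_0_iff: "encode_bits s = 0 \<longleftrightarrow> s = []"
  by (cases s) auto

lemma inj_encode_bits: "inj encode_bits"
proof (rule injI)
  show "encode_bits s = encode_bits t \<Longrightarrow> s = t" for s t
  proof (induction s arbitrary: t)
    case Nil
    then show ?case by (simp add: encode_bits_eq_0_iff)
  next
    case (Cons a s)
    then obtain b t' where t: "t = b # t'"
      by (cases t) (auto split: if_splits)
    then have "a = b"
      using Cons.prems by (auto split: if_splits) presburger+
    then show ?case
      using Cons t by auto
  qed
qed

lemma surj_encode_bits: "surj encode_bits"
proof -
  have "\<exists>s. encode_bits s = c" for c
  proof (induction c rule: less_induct)
    case (less c)
    consider "c = 0" | "odd c" | "c \<noteq> 0" "even c"
      by blast
    then show ?case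
    proof cases
      case 1
      then show ?thesis by (intro exI[of _ "[]"]) simp
    next
      case 2
      then have "(c - 1) div 2 < c"
        by presburger
      then obtain s where "encode_bits s = (c - 1) div 2"
        using less by blast
      with 2 show ?thesis by (intro exI[of _ "False # s"]) auto
    next
      case 3
      then have "(c - 2) div 2 < c"
        by presburger
      then obtain s where "encode_bits s = (c - 2) div 2"
        using less by blast
      with 3 show ?thesis by (intro exI[of _ "True # s"]) auto
    qed
  qed
  then show ?thesis
    by (metis surjI)
qed

lemma encode_bits_inv [simp]: "encode_bits (inv encode_bits c) = c"
  by (rule surj_f_inv_f[OF surj_encode_bits])

text \<open>encode_bits reads a string as a little-endian numeral with digits 1 (False) and 2 (True),
  so dropping the first k letters of s is k-fold bits_tl and taking them is the remainder
  modulo 2 ^ k times the dropped part.\<close>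

definition bits_tl :: "nat \<Rightarrow> nat" where
  "bits_tl x = (x - 1) div 2"

definition bits_drop :: "nat \<Rightarrow> nat \<Rightarrow> nat" where
  "bits_drop k = bits_tl ^^ k"

definition bits_take :: "nat \<Rightarrow> nat \<Rightarrow> nat" where
  "bits_take k x = x - 2 ^ k * bits_drop k x"

definition bits_length :: "nat \<Rightarrow> nat" where
  "bits_length x = count_below (\<lambda>k. 0 < bits_drop k x) x"

lemma bits_tl_encode_bits: "bits_tl (encode_bits s) = encode_bits (tl s)"
  by (cases s) (auto simp: bits_tl_def)

lemma bits_drop_encode_bits: "bits_drop k (encode_bits s) = encode_bits (drop k s)"
proof (induction k arbitrary: s)
  case 0
  then show ?case by (simp add: bits_drop_def)
next
  case (Suc k)
  have "bits_drop (Suc k) (encode_bits s) = bits_drop k (bits_tl (encode_bits s))"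
    by (simp add: bits_drop_def funpow_Suc_right del: funpow.simps)
  then show ?case
    using Suc by (simp add: bits_tl_encode_bits drop_Suc)
qed

lemma encode_bits_take_drop:
  "encode_bits s = encode_bits (take k s) + 2 ^ k * encode_bits (drop k s)"
proof (induction s arbitrary: k)
  case (Cons a s)
  show ?case
  proof (cases k)
    case (Suc j)
    then show ?thesis
      using Cons.IH[of j] by (simp add: algebra_simps)
  qed simp
qed simp

lemma bits_take_encode_bits: "bits_take k (encode_bits s) = encode_bits (take k s)"
  unfolding bits_take_def bits_drop_encode_bits using encode_bits_take_drop[of s k] by simp

lemma bits_length_encode_bits: "bits_length (encode_bits s) = length s"
proof -
  have "bits_length (encode_bits s) = count_below (\<lambda>k. k < length s) (encode_bits s)"
    unfolding bits_length_def bits_drop_encode_bits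
    by (rule count_below_cong) (auto simp: encode_bits_eq_0_iff simp flip: neq0_conv)
  also have "\<dots> = card {..<length s}"
    unfolding count_below_def using length_le_encode_bits[of s]
    by (intro arg_cong[where f = card]) auto
  finally show ?thesis
    by simp
qed

lemma rf_computable_bits_drop:
  "rf_computable n g \<Longrightarrow> rf_computable n h \<Longrightarrow> rf_computable n (\<lambda>xs. bits_drop (g xs) (h xs))"
proof (rule rf_computable_compose2[where h = bits_drop])
  show "rf_computable 2 (\<lambda>ys. bits_drop (ys ! 0) (ys ! 1))"
    by (rule rf_computable_rec2[where B = "\<lambda>x. x" and S = "\<lambda>k v x. (v - 1) div 2"])
       (intro rf_computable_proj rf_computable_div2 rf_computable_diff rf_computable_const
         | simp add: bits_drop_def bits_tl_def)+
qed

lemma rf_computable_bits_take: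
  "rf_computable n g \<Longrightarrow> rf_computable n h \<Longrightarrow> rf_computable n (\<lambda>xs. bits_take (g xs) (h xs))"
  unfolding bits_take_def
  by (intro rf_computable_diff rf_computable_mult rf_computable_power2 rf_computable_bits_drop)

lemma rf_computable_bits_length:
  "rf_computable n g \<Longrightarrow> rf_computable n (\<lambda>xs. bits_length (g xs))"
  unfolding bits_length_def
  by (intro rf_computable_count_below[where P = "\<lambda>k x. 0 < bits_drop k x"] rf_computable_positive
      rf_computable_bits_drop rf_computable_proj) simp_all

lemma computable_lf_iff_rf_computable:
  "computable_lf l \<longleftrightarrow> rf_computable 1 (\<lambda>ys. of_bool (l (inv encode_bits (ys ! 0))))"
proof
  assume "computable_lf l"
  then obtain r where r: "\<And>s. eval_rf r [encode_bits s] (of_bool (l s))"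
    unfolding computable_lf_def by (auto simp: of_bool_def)
  show "rf_computable 1 (\<lambda>ys. of_bool (l (inv encode_bits (ys ! 0))))"
    unfolding rf_computable_def
  proof (intro exI allI impI)
    fix ys :: "nat list"
    assume "length ys = 1"
    then have "ys = [encode_bits (inv encode_bits (ys ! 0))]"
      using length_eq_1_nth by simp
    then show "eval_rf r ys (of_bool (l (inv encode_bits (ys ! 0))))"
      using r by metis
  qed
next
  assume "rf_computable 1 (\<lambda>ys. of_bool (l (inv encode_bits (ys ! 0))))"
  then obtain r where "\<And>s. eval_rf r [encode_bits s] (of_bool (l s))"
    unfolding rf_computable_def by (metis (no_types) One_nat_def inj_encode_bits inv_f_f
        length_Cons list.size(3) nth_Cons_0)
  then show "computable_lf l"
    unfolding computable_lf_def of_bool_def by blast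
qed

lemma combined_learner_inv_encode_bits:
  "combined_learner l1 l2 (inv encode_bits x) \<longleftrightarrow>
     jump_at (\<lambda>K. max (count_below (\<lambda>k. l1 (inv encode_bits (bits_take k x))) K)
                      (count_below (\<lambda>k. l2 (inv encode_bits (bits_take k x))) K))
       (bits_length x)"
proof -
  obtain s where "x = encode_bits s"
    using surj_encode_bits by (metis surjD)
  then show ?thesis
    by (simp add: combined_learner_def bits_take_encode_bits bits_length_encode_bits
        inv_f_f[OF inj_encode_bits])
qed

lemma computable_combined_learner:
  assumes "computable_lf l1" and "computable_lf l2"
  shows "computable_lf (combined_learner l1 l2)"
proof -
  have decide_prefix:
    "rf_computable 2 (\<lambda>ys. of_bool (l (inv encode_bits (bits_take (ys ! 0) (ys ! 1)))))"
    if "computable_lf l" for l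
    using that unfolding computable_lf_iff_rf_computable
    by (rule rf_computable_compose1[where h = "\<lambda>x. of_bool (l (inv encode_bits x))"])
      (simp add: rf_computable_bits_take rf_computable_proj)
  note count_yes = rf_computable_count_below[OF decide_prefix[OF assms(1)]]
    rf_computable_count_below[OF decide_prefix[OF assms(2)]]
  show ?thesis
    unfolding computable_lf_iff_rf_computable combined_learner_inv_encode_bits jump_at_def
    by (intro rf_computable_conj rf_computable_less rf_computable_le rf_computable_max count_yes
        rf_computable_Suc rf_computable_bits_length rf_computable_proj rf_computable_const) simp_all
qed

theorem mainTheorem3:
  fixes l1 l2 :: learning_function and \<Gamma>1 \<Gamma>2 :: "(nat \<Rightarrow> bool) set"
  assumes "uniformly_weakly_detects l1 \<Gamma>1"
      and "uniformly_weakly_detects l2 \<Gamma>2"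
  shows "(\<exists>l3. uniformly_weakly_detects l3 (\<Gamma>1 \<union> \<Gamma>2)) \<and>
         (computable_lf l1 \<and> computable_lf l2 \<longrightarrow>
            (\<exists>l3. uniformly_weakly_detects l3 (\<Gamma>1 \<union> \<Gamma>2) \<and> computable_lf l3))"
  using uniformly_weakly_detects_combined_learner[OF assms] computable_combined_learner by blast

end
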